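(* Consider the single-armed lazy restless bandit described in the context with $p_{0,0}>p_{1,0}$ (positively correlated arm), fixed subsidy $\eta$ and $\beta\in(0,1)$. Then $V(\pi)$, $V_S(\pi)$ and $V_{NS}(\pi)$ are decreasing in $\pi\in[0,1]$.
   Context: Single-armed lazy restless bandit: an arm has a hidden state in $\{0,1\}$ evolving as a two-state Markov chain with transition probabilities $p_{i,j}$ ($p_{i,0}+p_{i,1}=1$). During each session the chain makes exactly $K\ge1$ transitions. In each session the decision maker plays the arm or not. If played with the arm in state $i$ at session start, an ACK is received with probability $\rho_i\in[0,1]$ and the expected reward is $R_i$; if not played, subsidy $\eta$ is received and nothing observed. Standing assumptions: $\rho_0<\rho_1$, $R_0<R_1$. Belief $\pi\in[0,1]$ = probability of state $0$. $R_S(\pi)=\pi R_0+(1-\pi)R_1$, $\rho(\pi)=\pi\rho_0+(1-\pi)\rho_1$, $\gamma_1(\pi)=\frac{(1-\pi)\rho_1p_{1,0}+\pi\rho_0p_{0,0}}{\rho_1(1-\pi)+\rho_0\pi}$, $\gamma_0(\pi)=\frac{(1-\pi)(1-\rho_1)p_{1,0}+\pi(1-\rho_0)p_{0,0}}{(1-\rho_1)(1-\pi)+(1-\rho_0)\pi}$, $\gamma_2(\pi)=(p_{0,0}-p_{1,0})^K\pi+p_{1,0}\sum_{j=0}^{K-1}(p_{0,0}-p_{1,0})^j$. $V_S,V_{NS},V$ are the unique bounded solution of $V_S(\pi)=R_S(\pi)+\beta\big(\rho(\pi)V(\gamma_1(\pi))+(1-\rho(\pi))V(\gamma_0(\pi))\big)$,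 $V_{NS}(\pi)=\eta+\beta V(\gamma_2(\pi))$, $V(\pi)=\max\{V_S(\pi),V_{NS}(\pi)\}$ (a term with zero coefficient is taken to be $0$). *)

theory Defs
  imports "HOL-Analysis.Analysis"
begin

text \<open>Single-armed lazy restless bandit. Belief b = probability of state 0.
  Transition probabilities: p00 = p_{0,0}, p10 = p_{1,0}
  (so p_{0,1} = 1 - p00, p_{1,1} = 1 - p10).\<close>

definition R_S :: "real \<Rightarrow> real \<Rightarrow> real \<Rightarrow> real" where
  "R_S R0 R1 b = b * R0 + (1 - b) * R1"

definition rho :: "real \<Rightarrow> real \<Rightarrow> real \<Rightarrow> real" where
  "rho rho0 rho1 b = b * rho0 + (1 - b) * rho1"

definition gamma1 :: "real \<Rightarrow> real \<Rightarrow> real \<Rightarrow> real \<Rightarrow> real \<Rightarrow> real" where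
  "gamma1 p00 p10 rho0 rho1 b =
     ((1 - b) * rho1 * p10 + b * rho0 * p00) / (rho1 * (1 - b) + rho0 * b)"

definition gamma0 :: "real \<Rightarrow> real \<Rightarrow> real \<Rightarrow> real \<Rightarrow> real \<Rightarrow> real" where
  "gamma0 p00 p10 rho0 rho1 b =
     ((1 - b) * (1 - rho1) * p10 + b * (1 - rho0) * p00) /
     ((1 - rho1) * (1 - b) + (1 - rho0) * b)"

definition gamma2 :: "real \<Rightarrow> real \<Rightarrow> nat \<Rightarrow> real \<Rightarrow> real" where
  "gamma2 p00 p10 K b =
     (p00 - p10) ^ K * b + p10 * (\<Sum>j<K. (p00 - p10) ^ j)"

text \<open>A term with zero coefficient contributes 0; in HOL the
  corresponding gamma is 0/0 = 0, which lies in [0,1], and the product with the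
  zero coefficient vanishes, so the convention is respected.\<close>

definition bandit_solution ::
  "real \<Rightarrow> real \<Rightarrow> nat \<Rightarrow> real \<Rightarrow> real \<Rightarrow> real \<Rightarrow> real \<Rightarrow> real \<Rightarrow> real \<Rightarrow>
   (real \<Rightarrow> real) \<Rightarrow> (real \<Rightarrow> real) \<Rightarrow> (real \<Rightarrow> real) \<Rightarrow> bool" where
  "bandit_solution p00 p10 K rho0 rho1 R0 R1 eta beta VS VNS V \<longleftrightarrow>
     bounded (VS ` {0..1}) \<and> bounded (VNS ` {0..1}) \<and> bounded (V ` {0..1}) \<and>
     (\<forall>b\<in>{0..1}.
        VS b = R_S R0 R1 b + beta * (rho rho0 rho1 b * V (gamma1 p00 p10 rho0 rho1 b)
                 + (1 - rho rho0 rho1 b) * V (gamma0 p00 p10 rho0 rho1 b)) \<and>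
        VNS b = eta + beta * V (gamma2 p00 p10 K b) \<and>
        V b = max (VS b) (VNS b))"

end

theory Submission
  imports Defs
begin

text \<open>Let D be the largest increase of V between two ordered beliefs. One Bellman step
  maps a D-slack in the monotonicity of V to a (beta D)-slack in VS, VNS and V: the
  immediate reward decreases in the belief, the idle update gamma2 is increasing, and
  after playing, the posteriors gamma1 and gamma0 are increasing with gamma1 below gamma0,
  so the two posterior lotteries can be coupled monotonically. Hence D \<le> beta D, and
  D = 0 since beta < 1.\<close>

definition decreasing_up_to :: "'a::ord set \<Rightarrow> real \<Rightarrow> ('a \<Rightarrow> real) \<Rightarrow> bool" where
  "decreasing_up_to S D f \<longleftrightarrow> (\<forall>u\<in>S. \<forall>v\<in>S. u \<le> v \<longrightarrow> f v \<le> f u + D)"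

lemma decreasing_up_toI:
  "(\<And>u v. u \<in> S \<Longrightarrow> v \<in> S \<Longrightarrow> u \<le> v \<Longrightarrow> f v \<le> f u + D) \<Longrightarrow> decreasing_up_to S D f"
  unfolding decreasing_up_to_def by blast

lemma decreasing_up_toD:
  "decreasing_up_to S D f \<Longrightarrow> u \<in> S \<Longrightarrow> v \<in> S \<Longrightarrow> u \<le> v \<Longrightarrow> f v - f u \<le> D"
  unfolding decreasing_up_to_def by force

lemma decreasing_up_to_mono:
  "decreasing_up_to S D f \<Longrightarrow> D \<le> D' \<Longrightarrow> decreasing_up_to S D' f"
  unfolding decreasing_up_to_def by force

lemma decreasing_up_to_zero_if_contracting:
  fixes f :: "'a::preorder \<Rightarrow> real"
  assumes "bounded (f ` S)" "beta < 1"
    and contract: "\<And>D. decreasing_up_to S D f \<Longrightarrow> decreasing_up_to S (beta * D) f"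
  shows "decreasing_up_to S 0 f"
proof (cases "S = {}")
  case False
  define Inc where "Inc = {f v - f u | u v. u \<in> S \<and> v \<in> S \<and> u \<le> v}"
  define D where "D = Sup Inc"
  obtain M where M: "\<And>x. x \<in> S \<Longrightarrow> \<bar>f x\<bar> \<le> M"
    using assms(1) unfolding bounded_iff by (metis image_eqI real_norm_def)
  have Inc_cases: "P" if "z \<in> Inc"
      and "\<And>u v. z = f v - f u \<Longrightarrow> u \<in> S \<Longrightarrow> v \<in> S \<Longrightarrow> u \<le> v \<Longrightarrow> P" for z P
    using that unfolding Inc_def by blast
  have "z \<le> 2 * M" if "z \<in> Inc" for z
    using that by (rule Inc_cases) (smt (verit) M)
  then have "bdd_above Inc"
    by (rule bdd_aboveI)
  obtain s where "s \<in> S"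
    using False by blast
  then have "f s - f s \<in> Inc"
    unfolding Inc_def by blast
  then have "0 \<in> Inc"
    by simp
  have "decreasing_up_to S D f"
  proof (rule decreasing_up_toI)
    fix u v assume "u \<in> S" "v \<in> S" "u \<le> v"
    then have "f v - f u \<in> Inc"
      unfolding Inc_def by blast
    then have "f v - f u \<le> D"
      using \<open>bdd_above Inc\<close> unfolding D_def by (rule cSup_upper)
    then show "f v \<le> f u + D"
      by simp
  qed
  then have contracted: "decreasing_up_to S (beta * D) f"
    by (rule contract)
  have "z \<le> beta * D" if "z \<in> Inc" for z
    using that by (rule Inc_cases) (use contracted decreasing_up_toD in blast)
  then have "D \<le> beta * D"
    using \<open>0 \<in> Inc\<close> unfolding D_def by (intro cSup_least) auto
  then have "(1 - beta) * D \<le> 0"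
    by (simp add: algebra_simps)
  then have "D \<le> 0"
    using \<open>beta < 1\<close> by (simp add: mult_le_0_iff)
  with \<open>decreasing_up_to S D f\<close> show ?thesis
    by (rule decreasing_up_to_mono)
qed (simp add: decreasing_up_to_def)

lemma R_S_antimono:
  assumes "R0 \<le> R1" "x \<le> y"
  shows "R_S R0 R1 y \<le> R_S R0 R1 x"
proof -
  have "R_S R0 R1 x - R_S R0 R1 y = (y - x) * (R1 - R0)"
    unfolding R_S_def by (simp add: algebra_simps)
  then show ?thesis
    using assms by (metis diff_ge_0_iff_ge zero_le_mult_iff)
qed

definition play_continuation ::
  "real \<Rightarrow> real \<Rightarrow> real \<Rightarrow> real \<Rightarrow> (real \<Rightarrow> real) \<Rightarrow> real \<Rightarrow> real" where
  "play_continuation p00 p10 rho0 rho1 W b =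
     rho rho0 rho1 b * W (gamma1 p00 p10 rho0 rho1 b)
     + (1 - rho rho0 rho1 b) * W (gamma0 p00 p10 rho0 rho1 b)"

locale belief_dynamics =
  fixes p00 p10 rho0 rho1 :: real
  assumes p10_nonneg: "0 \<le> p10" and positively_correlated: "p10 \<le> p00"
    and p00_le_one: "p00 \<le> 1"
    and rho0_nonneg: "0 \<le> rho0" and rho0_le_rho1: "rho0 \<le> rho1"
    and rho1_le_one: "rho1 \<le> 1"
begin

abbreviation "r \<equiv> rho rho0 rho1"
abbreviation "g1 \<equiv> gamma1 p00 p10 rho0 rho1"
abbreviation "g0 \<equiv> gamma0 p00 p10 rho0 rho1"

lemma rho_in_unit:
  assumes "b \<in> {0..1}"
  shows "0 \<le> r b" "r b \<le> 1"
proof -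
  show "0 \<le> r b"
    unfolding rho_def using assms rho0_nonneg rho0_le_rho1 by simp
  have "b * rho0 \<le> b * 1" "(1 - b) * rho1 \<le> (1 - b) * 1"
    using assms rho0_le_rho1 rho1_le_one by (intro mult_left_mono; simp)+
  then show "r b \<le> 1"
    unfolding rho_def by simp
qed

lemma rho_diff: "r x - r y = (y - x) * (rho1 - rho0)"
  unfolding rho_def by (simp add: algebra_simps)

lemma rho_antimono: "x \<le> y \<Longrightarrow> r y \<le> r x"
  using rho_diff[of x y] rho0_le_rho1 by (metis diff_ge_0_iff_ge zero_le_mult_iff)

lemma gamma1_eq: "g1 b = ((1 - b) * rho1 * p10 + b * rho0 * p00) / r b"
  unfolding gamma1_def rho_def by (simp add: algebra_simps)

lemma gamma0_eq: "g0 b = ((1 - b) * (1 - rho1) * p10 + b * (1 - rho0) * p00) / (1 - r b)"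
  unfolding gamma0_def rho_def by (simp add: algebra_simps)

lemma gamma1_in_unit:
  assumes "b \<in> {0..1}"
  shows "g1 b \<in> {0..1}"
proof (cases "r b = 0")
  case False
  then have "0 < r b"
    using rho_in_unit[OF assms] by simp
  have num_nonneg: "0 \<le> (1 - b) * rho1 * p10 + b * rho0 * p00"
    using assms rho0_nonneg rho0_le_rho1 p10_nonneg positively_correlated by simp
  have "(1 - b) * rho1 * p10 \<le> (1 - b) * rho1" "b * rho0 * p00 \<le> b * rho0"
    using assms rho0_nonneg rho0_le_rho1 p00_le_one positively_correlated p10_nonneg
    by (intro mult_left_le; simp)+
  then have num_le: "(1 - b) * rho1 * p10 + b * rho0 * p00 \<le> r b"
    unfolding rho_def by simp
  show ?thesis
    using \<open>0 < r b\<close> num_nonneg num_le by (simp add: gamma1_eq divide_simps)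
qed (simp add: gamma1_eq)

lemma gamma0_in_unit:
  assumes "b \<in> {0..1}"
  shows "g0 b \<in> {0..1}"
proof (cases "1 - r b = 0")
  case False
  then have "0 < 1 - r b"
    using rho_in_unit[OF assms] by simp
  have num_nonneg: "0 \<le> (1 - b) * (1 - rho1) * p10 + b * (1 - rho0) * p00"
    using assms rho1_le_one rho0_le_rho1 p10_nonneg positively_correlated by simp
  have "(1 - b) * (1 - rho1) * p10 \<le> (1 - b) * (1 - rho1)"
      "b * (1 - rho0) * p00 \<le> b * (1 - rho0)"
    using assms rho1_le_one rho0_le_rho1 p00_le_one positively_correlated p10_nonneg
    by (intro mult_left_le; simp)+
  moreover have "(1 - b) * (1 - rho1) + b * (1 - rho0) = 1 - r b"
    unfolding rho_def by (simp add: algebra_simps)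
  ultimately have num_le: "(1 - b) * (1 - rho1) * p10 + b * (1 - rho0) * p00 \<le> 1 - r b"
    by linarith
  show ?thesis
    using \<open>0 < 1 - r b\<close> num_nonneg num_le by (simp add: gamma0_eq divide_simps)
qed (simp add: gamma0_eq)

lemma gamma1_mono:
  assumes "x \<le> y" "0 < r y"
  shows "g1 x \<le> g1 y"
proof -
  have "0 < r x"
    using rho_antimono[OF assms(1)] assms(2) by simp
  have "((1 - y) * rho1 * p10 + y * rho0 * p00) * r x
      - ((1 - x) * rho1 * p10 + x * rho0 * p00) * r y
      = rho0 * rho1 * (p00 - p10) * (y - x)"
    unfolding rho_def by (simp add: algebra_simps)
  moreover have "0 \<le> rho0 * rho1 * (p00 - p10) * (y - x)"
    using assms rho0_nonneg rho0_le_rho1 positively_correlated by simp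
  ultimately show ?thesis
    using \<open>0 < r x\<close> assms(2) by (simp add: gamma1_eq divide_simps)
qed

lemma gamma0_mono:
  assumes "x \<le> y" "0 < 1 - r x"
  shows "g0 x \<le> g0 y"
proof -
  have "0 < 1 - r y"
    using rho_antimono[OF assms(1)] assms(2) by simp
  have "((1 - y) * (1 - rho1) * p10 + y * (1 - rho0) * p00) * (1 - r x)
      - ((1 - x) * (1 - rho1) * p10 + x * (1 - rho0) * p00) * (1 - r y)
      = (1 - rho0) * (1 - rho1) * (p00 - p10) * (y - x)"
    unfolding rho_def by (simp add: algebra_simps)
  moreover have "0 \<le> (1 - rho0) * (1 - rho1) * (p00 - p10) * (y - x)"
    using assms rho1_le_one rho0_le_rho1 positively_correlated by simp
  ultimately show ?thesis
    using \<open>0 < 1 - r y\<close> assms(2) by (simp add: gamma0_eq divide_simps)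
qed

lemma gamma1_le_gamma0:
  assumes "b \<in> {0..1}" "0 < r b" "0 < 1 - r b"
  shows "g1 b \<le> g0 b"
proof -
  have "((1 - b) * (1 - rho1) * p10 + b * (1 - rho0) * p00) * r b
      - ((1 - b) * rho1 * p10 + b * rho0 * p00) * (1 - r b)
      = (p00 - p10) * ((1 - b) * b * (rho1 - rho0))"
    unfolding rho_def by (simp add: algebra_simps)
  moreover have "0 \<le> (p00 - p10) * ((1 - b) * b * (rho1 - rho0))"
    using assms rho0_le_rho1 positively_correlated by simp
  ultimately show ?thesis
    using assms by (simp add: gamma0_eq gamma1_eq divide_simps)
qed

lemma gamma1_le_gamma0_of_rho_less:
  assumes "x \<in> {0..1}" "y \<in> {0..1}" "r y < r x"
  shows "g1 x \<le> g0 y"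
proof -
  have "0 < (y - x) * (rho1 - rho0)"
    using rho_diff[of x y] assms(3) by simp
  then have "x < y" "rho0 < rho1"
    using rho0_le_rho1 by (auto simp: zero_less_mult_iff)
  have "0 < r x"
    using assms rho_in_unit[OF assms(2)] by simp
  show ?thesis
  proof (cases "r x < 1")
    case True
    then have "g1 x \<le> g0 x"
      using gamma1_le_gamma0 assms(1) \<open>0 < r x\<close> by simp
    also have "g0 x \<le> g0 y"
      using gamma0_mono \<open>x < y\<close> True by simp
    finally show ?thesis .
  next
    case False
    \<comment> \<open>here gamma0 x is the junk value 0/0, so compare gamma1 x with gamma0 y directly\<close>
    then have "x * (rho1 - rho0) = rho1 - 1"
      using rho_in_unit[OF assms(1)] unfolding rho_def by (simp add: algebra_simps)
    moreover have "0 \<le> x * (rho1 - rho0)"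
      using assms(1) rho0_le_rho1 by simp
    ultimately have "rho1 = 1" "x = 0"
      using rho1_le_one \<open>rho0 < rho1\<close> by auto
    then have "g1 x = p10" "g0 y = p00"
      using \<open>x < y\<close> \<open>rho0 < rho1\<close> unfolding gamma1_def gamma0_def by simp_all
    then show ?thesis
      using positively_correlated by simp
  qed
qed

text \<open>Coupling: the lottery at y is the lottery at x with mass r x - r y moved from
  gamma1 x to gamma0 y, and each of the three resulting comparisons goes upwards.\<close>

lemma play_continuation_decreasing_up_to:
  assumes "decreasing_up_to {0..1} D W"
  shows "decreasing_up_to {0..1} D (play_continuation p00 p10 rho0 rho1 W)"
proof (rule decreasing_up_toI)
  fix x y :: real
  assume x: "x \<in> {0..1}" and y: "y \<in> {0..1}" and "x \<le> y"
  note W = decreasing_up_toD[OF assms]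
  have "r y \<le> r x"
    using rho_antimono[OF \<open>x \<le> y\<close>] .
  note rng = rho_in_unit[OF x] rho_in_unit[OF y]
    gamma1_in_unit[OF x] gamma1_in_unit[OF y] gamma0_in_unit[OF x] gamma0_in_unit[OF y]
  have hit: "r y * (W (g1 y) - W (g1 x)) \<le> r y * D"
  proof (cases "r y = 0")
    case False
    then show ?thesis
      using W gamma1_mono[OF \<open>x \<le> y\<close>] rng by (simp add: mult_left_mono)
  qed simp
  have moved: "(r x - r y) * (W (g0 y) - W (g1 x)) \<le> (r x - r y) * D"
  proof (cases "r y = r x")
    case False
    then show ?thesis
      using W gamma1_le_gamma0_of_rho_less[OF x y] \<open>r y \<le> r x\<close> rng
      by (simp add: mult_left_mono)
  qed simp
  have miss: "(1 - r x) * (W (g0 y) - W (g0 x)) \<le> (1 - r x) * D"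
  proof (cases "r x = 1")
    case False
    then show ?thesis
      using W gamma0_mono[OF \<open>x \<le> y\<close>] rng by (simp add: mult_left_mono)
  qed simp
  have "play_continuation p00 p10 rho0 rho1 W y - play_continuation p00 p10 rho0 rho1 W x
      = r y * (W (g1 y) - W (g1 x)) + (r x - r y) * (W (g0 y) - W (g1 x))
        + (1 - r x) * (W (g0 y) - W (g0 x))"
    unfolding play_continuation_def by (simp add: algebra_simps)
  also have "\<dots> \<le> r y * D + (r x - r y) * D + (1 - r x) * D"
    using hit moved miss by linarith
  finally show "play_continuation p00 p10 rho0 rho1 W y
      \<le> play_continuation p00 p10 rho0 rho1 W x + D"
    by (simp add: algebra_simps)
qed

lemma gamma2_Suc: "gamma2 p00 p10 (Suc K) b = gamma2 p00 p10 K (p00 * b + p10 * (1 - b))"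
  unfolding gamma2_def by (simp add: algebra_simps)

lemma gamma2_in_unit: "b \<in> {0..1} \<Longrightarrow> gamma2 p00 p10 K b \<in> {0..1}"
proof (induction K arbitrary: b)
  case (Suc K)
  have "p00 * b \<le> b" "p10 * (1 - b) \<le> 1 - b"
    using Suc.prems p00_le_one p10_nonneg positively_correlated
    by (auto intro: mult_left_le_one_le mult_left_le)
  then have "p00 * b + p10 * (1 - b) \<in> {0..1}"
    using Suc.prems p10_nonneg positively_correlated by auto
  then show ?case
    using Suc.IH gamma2_Suc by metis
qed (simp add: gamma2_def)

lemma gamma2_mono: "x \<le> y \<Longrightarrow> gamma2 p00 p10 K x \<le> gamma2 p00 p10 K y"
  unfolding gamma2_def using positively_correlated by (simp add: mult_left_mono)

lemma bellman_decreasing_up_to: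
  assumes sol: "bandit_solution p00 p10 K rho0 rho1 R0 R1 eta beta VS VNS V"
    and "R0 \<le> R1" "0 \<le> beta"
    and "decreasing_up_to {0..1} D V"
  shows "decreasing_up_to {0..1} (beta * D) VS"
    and "decreasing_up_to {0..1} (beta * D) VNS"
    and "decreasing_up_to {0..1} (beta * D) V"
proof -
  have VS_eq: "VS b = R_S R0 R1 b + beta * play_continuation p00 p10 rho0 rho1 V b"
    and VNS_eq: "VNS b = eta + beta * V (gamma2 p00 p10 K b)"
    and V_eq: "V b = max (VS b) (VNS b)" if "b \<in> {0..1}" for b
    using sol that unfolding bandit_solution_def play_continuation_def by auto
  have cont: "decreasing_up_to {0..1} D (play_continuation p00 p10 rho0 rho1 V)"
    using assms(4) by (rule play_continuation_decreasing_up_to)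
  show VS: "decreasing_up_to {0..1} (beta * D) VS"
  proof (rule decreasing_up_toI)
    fix x y :: real assume "x \<in> {0..1}" "y \<in> {0..1}" "x \<le> y"
    then have "beta * (play_continuation p00 p10 rho0 rho1 V y
        - play_continuation p00 p10 rho0 rho1 V x) \<le> beta * D"
      using decreasing_up_toD[OF cont] \<open>0 \<le> beta\<close> by (simp add: mult_left_mono)
    then show "VS y \<le> VS x + beta * D"
      using VS_eq[OF \<open>x \<in> {0..1}\<close>] VS_eq[OF \<open>y \<in> {0..1}\<close>]
        R_S_antimono[OF \<open>R0 \<le> R1\<close> \<open>x \<le> y\<close>]
      by (simp add: algebra_simps)
  qed
  show VNS: "decreasing_up_to {0..1} (beta * D) VNS"
  proof (rule decreasing_up_toI)
    fix x y :: real assume "x \<in> {0..1}" "y \<in> {0..1}" "x \<le> y"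
    then have "V (gamma2 p00 p10 K y) - V (gamma2 p00 p10 K x) \<le> D"
      using decreasing_up_toD[OF assms(4)] gamma2_in_unit gamma2_mono by blast
    then have "beta * (V (gamma2 p00 p10 K y) - V (gamma2 p00 p10 K x)) \<le> beta * D"
      using \<open>0 \<le> beta\<close> by (rule mult_left_mono)
    then show "VNS y \<le> VNS x + beta * D"
      using VNS_eq[OF \<open>x \<in> {0..1}\<close>] VNS_eq[OF \<open>y \<in> {0..1}\<close>]
      by (simp add: algebra_simps)
  qed
  show "decreasing_up_to {0..1} (beta * D) V"
  proof (rule decreasing_up_toI)
    fix x y :: real assume "x \<in> {0..1}" "y \<in> {0..1}" "x \<le> y"
    then have "VS y - VS x \<le> beta * D" "VNS y - VNS x \<le> beta * D"
      using decreasing_up_toD[OF VS] decreasing_up_toD[OF VNS] by blast+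
    then show "V y \<le> V x + beta * D"
      using V_eq[OF \<open>x \<in> {0..1}\<close>] V_eq[OF \<open>y \<in> {0..1}\<close>] by (auto simp: max_def)
  qed
qed

end

theorem lemma3:
  fixes p00 p10 rho0 rho1 R0 R1 eta beta :: real and K :: nat
    and VS VNS V :: "real \<Rightarrow> real"
  assumes "0 \<le> p10" "p00 \<le> 1" "p10 < p00"
    and "1 \<le> K"
    and "0 \<le> rho0" "rho0 < rho1" "rho1 \<le> 1"
    and "R0 < R1"
    and "0 < beta" "beta < 1"
    and "bandit_solution p00 p10 K rho0 rho1 R0 R1 eta beta VS VNS V"
  shows "\<forall>x\<in>{0..1}. \<forall>y\<in>{0..1}. x \<le> y \<longrightarrow>
           V y \<le> V x \<and> VS y \<le> VS x \<and> VNS y \<le> VNS x"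
proof -
  interpret belief_dynamics p00 p10 rho0 rho1
    using assms by unfold_locales auto
  note step = bellman_decreasing_up_to[OF assms(11) less_imp_le[OF assms(8)]
      less_imp_le[OF assms(9)]]
  have "bounded (V ` {0..1})"
    using assms(11) unfolding bandit_solution_def by blast
  then have "decreasing_up_to {0..1} 0 V"
    using assms(10) step(3) by (rule decreasing_up_to_zero_if_contracting)
  then show ?thesis
    using step[of 0] unfolding decreasing_up_to_def by simp
qed

end
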